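(* Let $0<\varepsilon<|B|$, $r>0$, $r_{\max}=r\sqrt{\log(|B|/\varepsilon)}$, and for $c\in\mathbb{R}^d$ let $K'_c(x)=K_c(x)$ if $\|x-c\|\le r_{\max}$ and $K'_c(x)=0$ otherwise. Then for every center $c\in\mathbb{R}^d$, \[ |\Phi(K_c)-\Phi(K'_c)|\le\varepsilon. \]
   Context: $B\subset\mathbb{R}^d$ finite nonempty, $m:B\to\{0,1\}$, $M=\{x\in B:m(x)=1\}$. Gaussian kernel with center $c$ and bandwidth $r$: $K_c(x)=\exp(-\|x-c\|^2/r^2)$. For $p,q\in[0,1]$ and $K:B\to[0,1]$: $g(x)=pK(x)+q(1-K(x))$, $\ell(p,q,K)=\frac{1}{|B|}\big(\sum_{x\in M}\log g(x)+\sum_{x\in B\setminus M}\log(1-g(x))\big)$ ($\log 0=-\infty$), $\ell_0(q)=\frac1{|B|}(|M|\log q+|B\setminus M|\log(1-q))$, and $\Phi(K)=\max_{p,q\in[0,1]}\ell(p,q,K)-\max_{q\in[0,1]}\ell_0(q)$. Standing assumption: the maximizer $(p^*,q^* )$ of $\ell(\cdot,\cdot,K)$ lies in $(0,1)^2$ with finite value. *)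

theory Defs
  imports "HOL-Analysis.Analysis"
begin

definition lnE :: "real \<Rightarrow> ereal" where
  "lnE x = (if x \<le> 0 then -\<infinity> else ereal (ln x))"

definition gauss :: "'a::euclidean_space \<Rightarrow> real \<Rightarrow> 'a \<Rightarrow> real" where
  "gauss c r x = exp (- (norm (x - c))\<^sup>2 / r\<^sup>2)"

definition gauss_trunc :: "'a::euclidean_space \<Rightarrow> real \<Rightarrow> real \<Rightarrow> 'a \<Rightarrow> real" where
  "gauss_trunc c r rmax x = (if norm (x - c) \<le> rmax then gauss c r x else 0)"

definition gmix :: "real \<Rightarrow> real \<Rightarrow> ('a \<Rightarrow> real) \<Rightarrow> 'a \<Rightarrow> real" where
  "gmix p q K x = p * K x + q * (1 - K x)"

text \<open>Log-likelihood ell(p,q,K); M is the set of points with m(x) = 1.\<close>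
definition ell :: "'a set \<Rightarrow> 'a set \<Rightarrow> real \<Rightarrow> real \<Rightarrow> ('a \<Rightarrow> real) \<Rightarrow> ereal" where
  "ell B M p q K = ereal (1 / real (card B)) *
     ((\<Sum>x\<in>M. lnE (gmix p q K x)) + (\<Sum>x\<in>B - M. lnE (1 - gmix p q K x)))"

definition ell0 :: "'a set \<Rightarrow> 'a set \<Rightarrow> real \<Rightarrow> ereal" where
  "ell0 B M q = ereal (1 / real (card B)) *
     ((\<Sum>x\<in>M. lnE q) + (\<Sum>x\<in>B - M. lnE (1 - q)))"

definition maxell :: "'a set \<Rightarrow> 'a set \<Rightarrow> ('a \<Rightarrow> real) \<Rightarrow> ereal" where
  "maxell B M K = (SUP pq \<in> {0..1} \<times> {0..1}. ell B M (fst pq) (snd pq) K)"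

definition maxell0 :: "'a set \<Rightarrow> 'a set \<Rightarrow> ereal" where
  "maxell0 B M = (SUP q \<in> {0..1}. ell0 B M q)"

definition Phi :: "'a set \<Rightarrow> 'a set \<Rightarrow> ('a \<Rightarrow> real) \<Rightarrow> ereal" where
  "Phi B M K = maxell B M K - maxell0 B M"

definition standing :: "'a set \<Rightarrow> 'a set \<Rightarrow> ('a \<Rightarrow> real) \<Rightarrow> bool" where
  "standing B M K \<longleftrightarrow> (\<exists>p q. p \<in> {0<..<1} \<and> q \<in> {0<..<1} \<and>
      ell B M p q K = maxell B M K \<and> ell B M p q K \<noteq> -\<infinity> \<and> ell B M p q K \<noteq> \<infinity>)"

end

theory Submission
  imports Defs
begin

text \<open>
  Put \<open>s = \<epsilon> / |B|\<close>. Beyond the cutoff radius the Gaussian kernel is at most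
  \<open>exp (- log (|B| / \<epsilon>)) = s\<close>, so truncation only replaces kernel values \<open>\<le> s\<close> by \<open>0\<close>.
  Hence every mixture \<open>(p, q)\<close> for one kernel is matched by a mixture for the other
  (the same one, resp. \<open>(p, (1 - s) q + s p)\<close>) that gives every observed label at least
  \<open>1 - s\<close> times its original probability. The maximal log-likelihoods therefore differ by
  at most \<open>- log (1 - s) \<le> s / (1 - s) \<le> \<epsilon>\<close> once \<open>\<epsilon> < 1 \<le> |B| - 1\<close>; the remaining cases
  follow from \<open>- log 2 \<le> max \<ell> \<le> 0\<close> and from \<open>max \<ell> = 0\<close> when all labels agree.
\<close>

definition lik :: "'a set \<Rightarrow> real \<Rightarrow> real \<Rightarrow> ('a \<Rightarrow> real) \<Rightarrow> 'a \<Rightarrow> real" where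
  "lik M p q K x = (if x \<in> M then gmix p q K x else 1 - gmix p q K x)"

lemma ell_eq_sum_lik:
  assumes "finite B" "M \<subseteq> B"
  shows "ell B M p q K = ereal (1 / real (card B)) * (\<Sum>x\<in>B. lnE (lik M p q K x))"
proof -
  have "(\<Sum>x\<in>B. lnE (lik M p q K x)) = (\<Sum>x\<in>B - M. lnE (lik M p q K x)) + (\<Sum>x\<in>M. lnE (lik M p q K x))"
    by (rule sum.subset_diff[OF assms(2,1)])
  then show ?thesis
    by (simp add: ell_def lik_def add.commute cong: sum.cong_simp)
qed

lemma ell0_half:
  assumes "finite B" "B \<noteq> {}" "M \<subseteq> B"
  shows "ell0 B M (1/2) = ereal (- ln 2)"
proof -
  have "lnE (1/2) = ereal (- ln 2)" "lnE (1 - 1/2) = ereal (- ln 2)"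
    by (simp_all add: lnE_def ln_div)
  moreover have "(\<Sum>x\<in>M. ereal (- ln 2)) + (\<Sum>x\<in>B - M. ereal (- ln 2)) = (\<Sum>x\<in>B. ereal (- ln 2))"
    using assms sum.subset_diff[of M B "\<lambda>_. ereal (- ln 2)"] by (simp add: add.commute)
  ultimately show ?thesis
    using assms by (simp add: ell0_def)
qed

lemma gmix_bounds:
  assumes "p \<in> {0..1}" "q \<in> {0..1}" "K x \<in> {0..1}"
  shows "0 \<le> gmix p q K x" "gmix p q K x \<le> 1"
  using assms mult_left_le_one_le[of "K x" p] mult_left_le_one_le[of "1 - K x" q]
  by (auto simp: gmix_def mult.commute)

lemma lik_bounds:
  assumes "p \<in> {0..1}" "q \<in> {0..1}" "K x \<in> {0..1}"
  shows "0 \<le> lik M p q K x" "lik M p q K x \<le> 1"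
  using gmix_bounds[of p q K x] assms by (auto simp: lik_def)

lemma lnE_nonpos: "y \<le> 1 \<Longrightarrow> lnE y \<le> 0"
  by (simp add: lnE_def)

lemma ell_nonpos:
  assumes "finite B" "M \<subseteq> B" "p \<in> {0..1}" "q \<in> {0..1}" "\<And>x. K x \<in> {0..1}"
  shows "ell B M p q K \<le> 0"
proof -
  have "(\<Sum>x\<in>B. lnE (lik M p q K x)) \<le> 0"
    by (intro sum_nonpos lnE_nonpos lik_bounds(2)) (use assms in auto)
  then have "ereal (1 / real (card B)) * (\<Sum>x\<in>B. lnE (lik M p q K x)) \<le> ereal (1 / real (card B)) * 0"
    by (intro ereal_mult_left_mono) auto
  then show ?thesis
    by (simp add: ell_eq_sum_lik[OF assms(1,2)])
qed

lemma ell_diag: "ell B M q q K = ell0 B M q"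
  by (simp add: ell_def ell0_def gmix_def algebra_simps)

lemma maxell_ge_ell: "p \<in> {0..1} \<Longrightarrow> q \<in> {0..1} \<Longrightarrow> ell B M p q K \<le> maxell B M K"
  unfolding maxell_def by (rule SUP_upper2[of "(p, q)"]) auto

lemma maxell_bounds:
  assumes "finite B" "B \<noteq> {}" "M \<subseteq> B" "\<And>x. K x \<in> {0..1}"
  shows "ereal (- ln 2) \<le> maxell B M K" "maxell B M K \<le> 0"
proof -
  show "ereal (- ln 2) \<le> maxell B M K"
    using maxell_ge_ell[of "1/2" "1/2" B M K] by (simp add: ell_diag ell0_half[OF assms(1-3)])
  show "maxell B M K \<le> 0"
    unfolding maxell_def by (rule SUP_least) (use ell_nonpos[OF assms(1,3) _ _ assms(4)] in auto)
qed

lemma maxell0_bounds: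
  assumes "finite B" "B \<noteq> {}" "M \<subseteq> B"
  shows "ereal (- ln 2) \<le> maxell0 B M" "maxell0 B M \<le> 0"
proof -
  show "ereal (- ln 2) \<le> maxell0 B M"
    unfolding maxell0_def by (rule SUP_upper2[of "1/2"]) (auto simp: ell0_half[OF assms])
  show "maxell0 B M \<le> 0"
    unfolding maxell0_def
  proof (rule SUP_least)
    fix q :: real
    assume "q \<in> {0..1}"
    then show "ell0 B M q \<le> 0"
      using ell_nonpos[OF assms(1,3), of q q "\<lambda>_. 0"] by (simp add: ell_diag)
  qed
qed

lemma maxell_pure_labels:
  assumes "M = {} \<or> M = B"
  shows "0 \<le> maxell B M K"
proof -
  have "ell B M (if M = {} then 0 else 1) (if M = {} then 0 else 1) K = 0"
    using assms by (auto simp: ell_def gmix_def lnE_def)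
  then show ?thesis
    using maxell_ge_ell[of "if M = {} then 0 else 1" "if M = {} then 0 else 1" B M K] by simp
qed

lemma lnE_add_ln_le:
  assumes "0 < t" "t * y \<le> y'"
  shows "lnE y + ereal (ln t) \<le> lnE y'"
proof (cases "0 < y")
  case True
  have "0 < t * y"
    using True assms(1) by simp
  moreover have "0 < y'"
    using calculation assms(2) by linarith
  ultimately have "ln (t * y) \<le> ln y'"
    using assms(2) by (subst ln_le_cancel_iff) auto
  then show ?thesis
    using True assms(1) \<open>0 < y'\<close> by (simp add: lnE_def ln_mult)
qed (simp add: lnE_def)

lemma ell_add_ln_le:
  assumes "finite B" "B \<noteq> {}" "M \<subseteq> B" "0 < t"
    and "\<And>x. x \<in> B \<Longrightarrow> t * lik M p q K x \<le> lik M p' q' K' x"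
  shows "ell B M p q K + ereal (ln t) \<le> ell B M p' q' K'"
proof -
  define N where "N = real (card B)"
  define S where "S = (\<Sum>x\<in>B. lnE (lik M p q K x))"
  have N: "0 < N"
    using assms(1,2) by (simp add: N_def card_gt_0_iff)
  have "S + ereal (N * ln t) = (\<Sum>x\<in>B. lnE (lik M p q K x) + ereal (ln t))"
    by (simp add: S_def N_def sum.distrib)
  also have "\<dots> \<le> (\<Sum>x\<in>B. lnE (lik M p' q' K' x))"
    using assms(4,5) by (intro sum_mono lnE_add_ln_le)
  finally have sum_le: "S + ereal (N * ln t) \<le> (\<Sum>x\<in>B. lnE (lik M p' q' K' x))" .
  have "S \<noteq> \<infinity>"
    by (simp add: S_def lnE_def sum_Pinfty)
  then have "ereal (1 / N) * S + ereal (ln t) = ereal (1 / N) * (S + ereal (N * ln t))"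
    using N by (cases S) (simp_all add: field_simps)
  also have "\<dots> \<le> ereal (1 / N) * (\<Sum>x\<in>B. lnE (lik M p' q' K' x))"
    using N sum_le by (intro ereal_mult_left_mono) auto
  finally show ?thesis
    by (simp add: ell_eq_sum_lik[OF assms(1,3)] N_def S_def)
qed

lemma maxell_add_ln_le:
  assumes "finite B" "B \<noteq> {}" "M \<subseteq> B" "0 < t"
    and "\<And>p q. p \<in> {0..1} \<Longrightarrow> q \<in> {0..1} \<Longrightarrow>
           \<exists>p'\<in>{0..1}. \<exists>q'\<in>{0..1}. \<forall>x\<in>B. t * lik M p q K x \<le> lik M p' q' K' x"
  shows "maxell B M K + ereal (ln t) \<le> maxell B M K'"
proof -
  have "maxell B M K \<le> maxell B M K' - ereal (ln t)"
    unfolding maxell_def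
  proof (rule SUP_least)
    fix pq :: "real \<times> real"
    assume "pq \<in> {0..1} \<times> {0..1}"
    then obtain p' q' where "p' \<in> {0..1}" "q' \<in> {0..1}"
      and "\<forall>x\<in>B. t * lik M (fst pq) (snd pq) K x \<le> lik M p' q' K' x"
      using assms(5)[of "fst pq" "snd pq"] by auto
    then have "ell B M (fst pq) (snd pq) K + ereal (ln t) \<le> maxell B M K'"
      using ell_add_ln_le[OF assms(1-4)] maxell_ge_ell order_trans by blast
    then show "ell B M (fst pq) (snd pq) K \<le> (SUP pq\<in>{0..1} \<times> {0..1}. ell B M (fst pq) (snd pq) K') - ereal (ln t)"
      by (simp add: maxell_def ereal_le_minus)
  qed
  then show ?thesis
    by (simp add: ereal_le_minus)
qed

definition truncation :: "real \<Rightarrow> ('a \<Rightarrow> real) \<Rightarrow> ('a \<Rightarrow> real) \<Rightarrow> bool" where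
  "truncation s K K' \<longleftrightarrow> (\<forall>x. K' x = K x \<or> (K' x = 0 \<and> K x \<le> s))"

lemma lik_truncation_le:
  assumes "truncation s K K'" "0 \<le> s" "p \<in> {0..1}" "q \<in> {0..1}" "K x \<in> {0..1}"
  shows "(1 - s) * lik M p q K' x \<le> lik M p q K x"
proof (cases "K' x = K x")
  case True
  have "0 \<le> s * lik M p q K x"
    using lik_bounds[of p q K x M] assms(2-5) by simp
  moreover have "lik M p q K' x = lik M p q K x"
    using True by (simp add: lik_def gmix_def)
  ultimately show ?thesis
    by (simp add: algebra_simps)
next
  case False
  then have "K' x = 0" "K x \<le> s"
    using assms(1) by (auto simp: truncation_def)
  moreover have "0 \<le> K x * p" "0 \<le> K x * (1 - p)" "0 \<le> (s - K x) * q" "0 \<le> (s - K x) * (1 - q)"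
    using calculation(2) assms(3-5) by auto
  ultimately show ?thesis
    by (simp add: lik_def gmix_def algebra_simps)
qed

lemma lik_le_truncation:
  assumes "truncation s K K'" "0 \<le> s" "s \<le> 1" "p \<in> {0..1}" "q \<in> {0..1}" "K x \<in> {0..1}"
  shows "(1 - s) * lik M p q K x \<le> lik M p ((1 - s) * q + s * p) K' x"
proof (cases "K' x = K x")
  case True
  have "0 \<le> s * p" "0 \<le> s * (1 - p)"
    using assms(2,4) by auto
  then show ?thesis
    using True by (simp add: lik_def gmix_def algebra_simps)
next
  case False
  then have "K' x = 0" "K x \<le> s"
    using assms(1) by (auto simp: truncation_def)
  moreover have "(1 - s) * K x \<le> s"
    using calculation(2) assms(2,3,6) mult_left_le_one_le[of "K x" "1 - s"] by auto
  then have "0 \<le> (1 - s) * K x * q" "0 \<le> p * (s - (1 - s) * K x)"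
    "0 \<le> (1 - s) * K x * (1 - q)" "0 \<le> (1 - p) * (s - (1 - s) * K x)"
    using assms(3-6) by auto
  ultimately show ?thesis
    by (simp add: lik_def gmix_def algebra_simps)
qed

lemma maxell_truncation_bounds:
  assumes "finite B" "B \<noteq> {}" "M \<subseteq> B" "truncation s K K'" "0 \<le> s" "s < 1"
    and "\<And>x. K x \<in> {0..1}"
  shows "maxell B M K + ereal (ln (1 - s)) \<le> maxell B M K'"
    and "maxell B M K' + ereal (ln (1 - s)) \<le> maxell B M K"
proof -
  show "maxell B M K + ereal (ln (1 - s)) \<le> maxell B M K'"
  proof (rule maxell_add_ln_le[OF assms(1-3)])
    fix p q :: real
    assume pq: "p \<in> {0..1}" "q \<in> {0..1}"
    then have "(1 - s) * q + s * p \<in> {0..1}"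
      using assms(5,6) convex_bound_le[of q 1 p "1 - s" s] by auto
    then show "\<exists>p'\<in>{0..1}. \<exists>q'\<in>{0..1}. \<forall>x\<in>B. (1 - s) * lik M p q K x \<le> lik M p' q' K' x"
      using pq lik_le_truncation[OF assms(4,5)] assms(6,7) by (meson less_imp_le)
  qed (use assms(6) in simp)
  show "maxell B M K' + ereal (ln (1 - s)) \<le> maxell B M K"
  proof (rule maxell_add_ln_le[OF assms(1-3)])
    fix p q :: real
    assume "p \<in> {0..1}" "q \<in> {0..1}"
    then show "\<exists>p'\<in>{0..1}. \<exists>q'\<in>{0..1}. \<forall>x\<in>B. (1 - s) * lik M p q K' x \<le> lik M p' q' K x"
      using lik_truncation_le[OF assms(4,5)] assms(7) by blast
  qed (use assms(6) in simp)
qed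

lemma ln_one_minus_ge:
  fixes s :: real
  assumes "0 \<le> s" "s < 1"
  shows "- (s / (1 - s)) \<le> ln (1 - s)"
proof -
  have "ln (1 / (1 - s)) \<le> 1 / (1 - s) - 1"
    using assms by (intro ln_le_minus_one) simp
  then show ?thesis
    using assms by (simp add: ln_div field_simps)
qed

lemma truncation_gauss_trunc:
  assumes "0 < r" "0 \<le> rmax"
  shows "truncation (exp (- (rmax / r)\<^sup>2)) (gauss c r) (gauss_trunc c r rmax)"
  unfolding truncation_def
proof
  fix x
  show "gauss_trunc c r rmax x = gauss c r x \<or>
        gauss_trunc c r rmax x = 0 \<and> gauss c r x \<le> exp (- (rmax / r)\<^sup>2)"
  proof (cases "norm (x - c) \<le> rmax")
    case False
    then have "(rmax / r)\<^sup>2 \<le> (norm (x - c))\<^sup>2 / r\<^sup>2"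
      using assms by (simp add: power_divide divide_right_mono power_mono)
    then show ?thesis
      using False by (simp add: gauss_trunc_def gauss_def)
  qed (simp add: gauss_trunc_def)
qed

lemma gauss_in_unit: "gauss c r x \<in> {0..1}"
  by (simp add: gauss_def)

lemma Phi_truncation_dist:
  assumes "finite B" "B \<noteq> {}" "M \<subseteq> B" "0 < eps" "eps < real (card B)"
    and "truncation (eps / real (card B)) K K'" "\<And>x. K x \<in> {0..1}"
  shows "\<bar>Phi B M K - Phi B M K'\<bar> \<le> ereal eps"
proof -
  define N where "N = real (card B)"
  define s where "s = eps / N"
  have s: "0 < s" "s < 1"
    using assms(4,5) by (simp_all add: s_def N_def)
  have K'_unit: "K' x \<in> {0..1}" for x
  proof -
    have "K' x = K x \<or> K' x = 0"
      using assms(6) by (auto simp: truncation_def)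
    then show ?thesis
      using assms(7)[of x] by auto
  qed
  obtain a a' z where a: "maxell B M K = ereal a" "- ln 2 \<le> a" "a \<le> 0"
    and a': "maxell B M K' = ereal a'" "- ln 2 \<le> a'" "a' \<le> 0"
    and z: "maxell0 B M = ereal z"
    using maxell_bounds[of B M K, OF assms(1-3,7)] maxell_bounds[of B M K', OF assms(1-3) K'_unit]
      maxell0_bounds[OF assms(1-3)]
    by (cases "maxell B M K"; cases "maxell B M K'"; cases "maxell0 B M") auto
  have close: "a + ln (1 - s) \<le> a'" "a' + ln (1 - s) \<le> a"
    using maxell_truncation_bounds[OF assms(1-3) assms(6)[folded N_def, folded s_def] _ s(2) assms(7)]
      s a a' by auto
  have "\<bar>a - a'\<bar> \<le> eps"
  proof -
    consider "1 \<le> eps" | "card B = 1" | "eps < 1" "2 \<le> card B"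
      using card_gt_0_iff[of B] assms(1,2) by fastforce
    then show ?thesis
    proof cases
      case 1
      then show ?thesis using a a' ln_2_less_1 by linarith
    next
      case 2
      then have "M = {} \<or> M = B"
        using assms(3) by (metis card_1_singletonE subset_singletonD)
      then have "0 \<le> a" "0 \<le> a'"
        using maxell_pure_labels[of M B] a(1) a'(1) by (metis ereal_less_eq(5))+
      then show ?thesis
        using a a' assms(4) by simp
    next
      case 3
      then have "1 \<le> N - eps"
        by (simp add: N_def)
      have "s / (1 - s) = eps / (N - eps)"
        using \<open>1 \<le> N - eps\<close> assms(4) by (simp add: s_def field_simps)
      also have "\<dots> \<le> eps / 1"
        using \<open>1 \<le> N - eps\<close> assms(4) by (intro divide_left_mono) auto
      finally show ?thesis
        using close ln_one_minus_ge[of s] s by linarith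
    qed
  qed
  then show ?thesis
    by (simp add: Phi_def a a' z)
qed

theorem lemmaA3:
  fixes B M :: "'a::euclidean_space set" and eps r :: real and c :: 'a
  assumes "finite B" and "B \<noteq> {}" and "M \<subseteq> B"
    and "0 < eps" and "eps < real (card B)" and "0 < r"
    and "standing B M (gauss c r)"
    and "standing B M (gauss_trunc c r (r * sqrt (ln (real (card B) / eps))))"
  shows "\<bar>Phi B M (gauss c r) - Phi B M (gauss_trunc c r (r * sqrt (ln (real (card B) / eps))))\<bar>
           \<le> ereal eps"
proof -
  define rmax where "rmax = r * sqrt (ln (real (card B) / eps))"
  have "0 < real (card B)" "0 < ln (real (card B) / eps)"
    using assms(1,2,4,5) by (simp_all add: card_gt_0_iff)
  then have "0 \<le> rmax" "exp (- (rmax / r)\<^sup>2) = eps / real (card B)"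
    using assms(4,6) by (simp_all add: rmax_def exp_minus)
  then have "truncation (eps / real (card B)) (gauss c r) (gauss_trunc c r rmax)"
    using truncation_gauss_trunc[OF assms(6)] by metis
  then show ?thesis
    unfolding rmax_def using Phi_truncation_dist[OF assms(1-5)] gauss_in_unit by blast
qed

end
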